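(* If $X$ is a finite quasi-metric space, then the Euler characteristic of its realized magnitude nerve is equal to the alternating sum of the ranks of its magnitude homology groups: \[ \chi(B(\Sigma X,\mathbb{1}))= \sum_n (-1)^n \,\mathrm{rk}\, \mathit{HM}_n(X), \] the infinite sum converging in the topology of $\mathbb{Q}(\!(q^\mathbb{R})\!)$.
   Context: A quasi-metric space is a skeletal $[0,\infty)$-enriched category (distances may be asymmetric, $d(x,y)>0$ for $x\ne y$). Let $\mathbf{A}=\prod_\mathbb{R}\mathrm{Ab}$ be $\mathbb{R}$-graded abelian groups with convolution tensor product $(A\otimes B)_\ell=\bigoplus_{j+k=\ell}A_j\otimes B_k$, and $\mathbf{W}=\mathrm{Ch}_\mathbf{A}$. Define $\Sigma:[0,\infty)\to\mathbf{W}$ by $\Sigma(\ell)=\mathbb{Z}$ in chain degree 0 and grading $\ell$, and $0$ elsewhere. $\mathbb{Q}(\!(q^\mathbb{R})\!)$ is the field of Hahn series $\sum_\ell a_\ell q^\ell$ ($a_\ell\in\mathbb{Q}$, well-ordered support), with the valuation topology (a series of Hahn series converges iff the smallest exponents of its terms tend to $\infty$). The Euler characteristic $\chi$ of a (Hahn finite) object of $\mathbf{W}$ is the Hahn series whose $q^\ell$-coefficient is the usual Euler characteristic of the grading-$\ell$ part; the rank of an $\mathbb{R}$-graded abelian group is likewise the Hahn series of the ranks of its graded pieces. The realized magnitude nerve $B(\Sigma X,\mathbb{1})$ is (after normalization) the chain complex whose $n$-chains in grading $\ell$ are freely generated by tuples $(x_0,\dots,x_n)$ with $x_i\neq x_{i+1}$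 and $d(x_0,x_1)+\cdots+d(x_{n-1},x_n)=\ell$, with boundary the alternating sum of the face maps $d^i$, where $d^i$ deletes $x_i$ if this does not change the total distance and is $0$ otherwise. Magnitude homology $\mathit{HM}_n(X)=\{\mathit{HM}^\ell_n(X)\}_{\ell\in\mathbb{R}}$ is the homology of this complex. *)

theory Defs
  imports Complex_Main "HOL-Algebra.Free_Abelian_Groups"
begin

definition quasi_metric :: "'a set \<Rightarrow> ('a \<Rightarrow> 'a \<Rightarrow> real) \<Rightarrow> bool" where
  "quasi_metric X d \<longleftrightarrow>
     (\<forall>x\<in>X. \<forall>y\<in>X. 0 \<le> d x y) \<and>
     (\<forall>x\<in>X. d x x = 0) \<and>
     (\<forall>x\<in>X. \<forall>y\<in>X. \<forall>z\<in>X. d x z \<le> d x y + d y z) \<and>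
     (\<forall>x\<in>X. \<forall>y\<in>X. x \<noteq> y \<longrightarrow> 0 < d x y)"

text \<open>Total distance of a tuple (x_0,...,x_n), represented as a list of length n+1.\<close>
definition tuple_length :: "('a \<Rightarrow> 'a \<Rightarrow> real) \<Rightarrow> 'a list \<Rightarrow> real" where
  "tuple_length d xs = (\<Sum>i<length xs - 1. d (xs ! i) (xs ! Suc i))"

definition nerve_gens :: "'a set \<Rightarrow> ('a \<Rightarrow> 'a \<Rightarrow> real) \<Rightarrow> nat \<Rightarrow> real \<Rightarrow> 'a list set" where
  "nerve_gens X d n l = {xs. length xs = Suc n \<and> set xs \<subseteq> X \<and>
       (\<forall>i<n. xs ! i \<noteq> xs ! Suc i) \<and> tuple_length d xs = l}"

definition nerve_chains :: "'a set \<Rightarrow> ('a \<Rightarrow> 'a \<Rightarrow> real) \<Rightarrow> nat \<Rightarrow> real \<Rightarrow> ('a list \<Rightarrow>\<^sub>0 int) monoid" where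
  "nerve_chains X d n l = free_Abelian_group (nerve_gens X d n l)"

definition delete_at :: "nat \<Rightarrow> 'a list \<Rightarrow> 'a list" where
  "delete_at i xs = take i xs @ drop (Suc i) xs"

definition nerve_face :: "('a \<Rightarrow> 'a \<Rightarrow> real) \<Rightarrow> nat \<Rightarrow> 'a list \<Rightarrow> 'a list \<Rightarrow>\<^sub>0 int" where
  "nerve_face d i xs =
     (if tuple_length d (delete_at i xs) = tuple_length d xs then frag_of (delete_at i xs) else 0)"

definition nerve_boundary :: "('a \<Rightarrow> 'a \<Rightarrow> real) \<Rightarrow> nat \<Rightarrow> ('a list \<Rightarrow>\<^sub>0 int) \<Rightarrow> 'a list \<Rightarrow>\<^sub>0 int" where
  "nerve_boundary d n c =
     (if n = 0 then 0
      else frag_extend (\<lambda>xs. \<Sum>i\<le>n. frag_cmul ((-1) ^ i) (nerve_face d i xs)) c)"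

definition magnitude_homology ::
  "'a set \<Rightarrow> ('a \<Rightarrow> 'a \<Rightarrow> real) \<Rightarrow> nat \<Rightarrow> real \<Rightarrow> ('a list \<Rightarrow>\<^sub>0 int) set monoid" where
  "magnitude_homology X d n l =
     subgroup_generated (nerve_chains X d n l)
        {c \<in> carrier (nerve_chains X d n l). nerve_boundary d n c = 0}
     Mod (nerve_boundary d (Suc n) ` carrier (nerve_chains X d (Suc n) l))"

definition lin_indep_Z :: "('g, 'm) monoid_scheme \<Rightarrow> 'g set \<Rightarrow> bool" where
  "lin_indep_Z G S \<longleftrightarrow>
     (\<forall>c :: 'g \<Rightarrow> int. finprod G (\<lambda>s. s [^]\<^bsub>G\<^esub> c s) S = \<one>\<^bsub>G\<^esub> \<longrightarrow> (\<forall>s\<in>S. c s = 0))"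

definition ab_rank :: "('g, 'm) monoid_scheme \<Rightarrow> nat" where
  "ab_rank G = Sup {card S | S. finite S \<and> S \<subseteq> carrier G \<and> lin_indep_Z G S}"

text \<open>A Hahn series sum_l a_l q^l is represented by its coefficient function;
  it must have well-ordered support.\<close>
definition is_hahn :: "(real \<Rightarrow> rat) \<Rightarrow> bool" where
  "is_hahn f \<longleftrightarrow> (\<forall>S. S \<subseteq> {l. f l \<noteq> 0} \<longrightarrow> S \<noteq> {} \<longrightarrow> (\<exists>m\<in>S. \<forall>s\<in>S. m \<le> s))"

text \<open>The series sum_n a_n converges to s in the valuation topology: for every bound M,
  eventually the partial sums agree with s in all exponents below M.\<close>
definition hahn_sums :: "(nat \<Rightarrow> real \<Rightarrow> rat) \<Rightarrow> (real \<Rightarrow> rat) \<Rightarrow> bool" where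
  "hahn_sums a s \<longleftrightarrow>
     (\<forall>M::real. \<exists>N0. \<forall>N\<ge>N0. \<forall>l<M. (\<Sum>n<N. a n l) = s l)"

text \<open>Euler characteristic of the realized magnitude nerve: the q^l coefficient is the
  Euler characteristic of the grading-l part (a finite sum, as the complex is Hahn finite).\<close>
definition nerve_euler_char :: "'a set \<Rightarrow> ('a \<Rightarrow> 'a \<Rightarrow> real) \<Rightarrow> real \<Rightarrow> rat" where
  "nerve_euler_char X d l =
     (\<Sum>n\<in>{n. ab_rank (nerve_chains X d n l) \<noteq> 0}.
        (-1) ^ n * of_nat (ab_rank (nerve_chains X d n l)))"

definition rank_HM :: "'a set \<Rightarrow> ('a \<Rightarrow> 'a \<Rightarrow> real) \<Rightarrow> nat \<Rightarrow> real \<Rightarrow> rat" where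
  "rank_HM X d n l = of_nat (ab_rank (magnitude_homology X d n l))"

end

theory Submission
  imports Defs "HOL-Library.Function_Algebras"
begin

text \<open>In each grading \<open>l\<close> the normalized nerve is a chain complex of finitely generated free
  abelian groups \<open>C\<^sub>n\<close>. Ranks are computed as \<open>\<rat>\<close>-dimensions after embedding integral
  chains into \<open>\<rat>\<close>-valued functions: the rank of a subquotient \<open>K / B\<close> is
  \<open>dim K - dim B\<close>, and rank--nullity for the boundary map gives
  \<open>rk C\<^sub>n\<^sub>+\<^sub>1 = rk Z\<^sub>n\<^sub>+\<^sub>1 + rk B\<^sub>n\<close>. Hence the alternating sum of
  \<open>rk HM\<^sub>n = rk Z\<^sub>n - rk B\<^sub>n\<close> up to \<open>N\<close> equals that of \<open>rk C\<^sub>n\<close> up to the error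
  \<open>rk B\<^sub>N\<close>. If \<open>\<delta>\<close> is the least nonzero distance, every \<open>n\<close>-chain has grading at
  least \<open>n \<delta>\<close>; so below any bound only finitely many gradings carry chains (whence the
  supports are well ordered), and for \<open>N\<close> large both \<open>C\<^sub>N\<^sub>+\<^sub>1\<close> and the error vanish.\<close>

section \<open>Linear algebra over \<open>\<rat>\<close>\<close>

definition qscale :: "rat \<Rightarrow> ('b \<Rightarrow> rat) \<Rightarrow> 'b \<Rightarrow> rat" where
  "qscale r f = (\<lambda>x. r * f x)"

interpretation Q: vector_space "qscale :: rat \<Rightarrow> ('b \<Rightarrow> rat) \<Rightarrow> _"
  by unfold_locales (auto simp: qscale_def fun_eq_iff algebra_simps)

definition independent_mod :: "('b \<Rightarrow> rat) set \<Rightarrow> ('b \<Rightarrow> rat) set \<Rightarrow> bool" where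
  "independent_mod W R \<longleftrightarrow>
     (\<forall>q. (\<Sum>r\<in>R. qscale (q r) r) \<in> Q.span W \<longrightarrow> (\<forall>r\<in>R. q r = 0))"

lemma independent_mod_not_in_span:
  assumes "finite R" "independent_mod W R" "r \<in> R"
  shows "r \<notin> Q.span W"
proof
  assume r: "r \<in> Q.span W"
  have "(\<Sum>x\<in>R. qscale (if x = r then 1 else 0) x) = (\<Sum>x\<in>R. if x = r then r else 0)"
    by (rule sum.cong) auto
  also have "\<dots> = r" using assms by simp
  finally have "(\<Sum>x\<in>R. qscale (if x = r then 1 else 0) x) \<in> Q.span W"
    using r by simp
  then have "\<forall>x\<in>R. (if x = r then 1 else (0::rat)) = 0"
    by (rule spec[OF assms(2)[unfolded independent_mod_def], THEN mp])
  then show False using assms(3) by auto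
qed

lemma finite_basis_exists:
  assumes "finite E" "W \<subseteq> Q.span E"
  obtains B where "B \<subseteq> W" "Q.independent B" "W \<subseteq> Q.span B" "card B = Q.dim W" "finite B"
proof -
  obtain B where B: "B \<subseteq> W" "Q.independent B" "W \<subseteq> Q.span B" "card B = Q.dim W"
    by (rule Q.basis_exists)
  moreover have "finite B"
    using Q.independent_span_bound[OF assms(1) B(2)] B(1) assms(2) by blast
  ultimately show ?thesis using that by blast
qed

lemma independent_Un_if_independent_mod:
  assumes R: "finite R" "independent_mod W R" and B: "finite B" "Q.independent B" "B \<subseteq> W"
  shows "Q.independent (R \<union> B)"
proof (rule Q.independent_if_scalars_zero)
  show "finite (R \<union> B)" using R B by simp
  have disj: "R \<inter> B = {}"
    using independent_mod_not_in_span[OF R] B(3) Q.span_base by blast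
  fix f x assume sum0: "(\<Sum>x\<in>R \<union> B. qscale (f x) x) = 0" and x: "x \<in> R \<union> B"
  have eq: "(\<Sum>x\<in>R. qscale (f x) x) = - (\<Sum>x\<in>B. qscale (f x) x)"
    using sum0 sum.union_disjoint[OF R(1) B(1) disj, of "\<lambda>x. qscale (f x) x"]
    by (simp add: eq_neg_iff_add_eq_0)
  have "(\<Sum>x\<in>B. qscale (f x) x) \<in> Q.span W"
    using B(3) by (intro Q.span_sum Q.span_scale Q.span_base) auto
  then have "(\<Sum>x\<in>R. qscale (f x) x) \<in> Q.span W"
    unfolding eq by (rule Q.span_neg)
  then have fR: "\<forall>r\<in>R. f r = 0" using R(2) unfolding independent_mod_def by blast
  then have "(\<Sum>x\<in>B. qscale (f x) x) = 0"
    using eq by (simp add: Q.scale_zero_left)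
  then have "\<forall>v\<in>B. f v = 0"
    using B(1,2) unfolding Q.independent_explicit_finite_subsets by blast
  then show "f x = 0" using fR x by blast
qed

lemma independent_mod_if_independent_Un:
  assumes fin: "finite R" "finite B" and ind: "Q.independent (R \<union> B)" and disj: "R \<inter> B = {}"
    and W: "W \<subseteq> Q.span B"
  shows "independent_mod W R"
  unfolding independent_mod_def
proof (intro allI impI)
  fix q assume "(\<Sum>r\<in>R. qscale (q r) r) \<in> Q.span W"
  moreover have "Q.span W \<subseteq> Q.span B"
    using W Q.span_minimal Q.subspace_span by blast
  ultimately obtain u where u: "(\<Sum>r\<in>R. qscale (q r) r) = (\<Sum>v\<in>B. qscale (u v) v)"
    using Q.span_finite[OF fin(2)] by blast
  define f where "f x = (if x \<in> R then q x else - u x)" for x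
  have "(\<Sum>x\<in>R \<union> B. qscale (f x) x) = (\<Sum>x\<in>R. qscale (f x) x) + (\<Sum>x\<in>B. qscale (f x) x)"
    by (rule sum.union_disjoint[OF fin disj])
  also have "(\<Sum>x\<in>R. qscale (f x) x) = (\<Sum>r\<in>R. qscale (q r) r)"
    by (rule sum.cong) (auto simp: f_def)
  also have "(\<Sum>x\<in>B. qscale (f x) x) = (\<Sum>x\<in>B. - qscale (u x) x)"
    by (rule sum.cong) (use disj in \<open>auto simp: f_def Q.scale_minus_left\<close>)
  also have "\<dots> = - (\<Sum>x\<in>B. qscale (u x) x)" by (simp add: sum_negf)
  also have "(\<Sum>r\<in>R. qscale (q r) r) + - (\<Sum>x\<in>B. qscale (u x) x) = 0"
    using u by simp
  finally have f0: "\<forall>v\<in>R \<union> B. f v = 0"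
    using ind fin unfolding Q.independent_explicit_finite_subsets by blast
  show "\<forall>r\<in>R. q r = 0"
  proof
    fix r assume "r \<in> R"
    then have "f r = 0" using f0 by blast
    then show "q r = 0" using \<open>r \<in> R\<close> by (simp add: f_def)
  qed
qed

lemma independent_mod_card_le:
  assumes E: "finite E" "V \<subseteq> Q.span E" and WV: "W \<subseteq> V"
    and R: "finite R" "R \<subseteq> V" "independent_mod W R"
  shows "card R + Q.dim W \<le> Q.dim V"
proof -
  obtain Bw where Bw: "Bw \<subseteq> W" "Q.independent Bw" "card Bw = Q.dim W" "finite Bw"
    using finite_basis_exists[OF E(1)] WV E(2) by (metis order_trans)
  obtain A where A: "V \<subseteq> Q.span A" "card A = Q.dim V" "finite A"
    using finite_basis_exists[OF E] by blast
  have disj: "R \<inter> Bw = {}"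
    using independent_mod_not_in_span[OF R(1,3)] Bw(1) Q.span_base by blast
  have "card (R \<union> Bw) \<le> card A"
    using Q.independent_span_bound[OF A(3) independent_Un_if_independent_mod[OF R(1,3) Bw(4,2,1)]]
      R(2) Bw(1) WV A(1) by blast
  then show ?thesis using card_Un_disjoint[OF R(1) Bw(4) disj] A(2) Bw(3) by simp
qed

lemma independent_mod_complement_exists:
  assumes E: "finite E" "V \<subseteq> Q.span E" and WV: "W \<subseteq> V"
  obtains R where "finite R" "R \<subseteq> V" "independent_mod W R" "card R + Q.dim W = Q.dim V"
proof -
  obtain Bw where Bw: "Bw \<subseteq> W" "Q.independent Bw" "W \<subseteq> Q.span Bw" "card Bw = Q.dim W" "finite Bw"
    using finite_basis_exists[OF E(1)] WV E(2) by (metis order_trans)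
  obtain Bv where Bv: "Bw \<subseteq> Bv" "Bv \<subseteq> V" "Q.independent Bv" "V \<subseteq> Q.span Bv"
    using Q.maximal_independent_subset_extend[of Bw V] Bw(1,2) WV by blast
  have fBv: "finite Bv" using Q.independent_span_bound[OF E(1) Bv(3)] Bv(2) E(2) by blast
  define R where "R = Bv - Bw"
  have "Bv = R \<union> Bw" "R \<inter> Bw = {}" "finite R" using R_def Bv(1) fBv by auto
  then have "independent_mod W R"
    using independent_mod_if_independent_Un[of R Bw] Bv(3) Bw(3,5) by simp
  moreover have "card R + Q.dim W = Q.dim V"
    using R_def card_Diff_subset[OF Bw(5) Bv(1)] Q.basis_card_eq_dim[OF Bv(2,4,3)] Bw(4)
      card_mono[OF fBv Bv(1)] by simp
  ultimately show ?thesis using that \<open>finite R\<close> R_def Bv(2) by blast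
qed

lemma dim_mono_finite_span:
  assumes "finite E" "V \<subseteq> Q.span E" "W \<subseteq> V"
  shows "Q.dim W \<le> Q.dim V"
  by (rule independent_mod_complement_exists[OF assms]) linarith

section \<open>Ranks of subquotients of free abelian groups\<close>

definition frag_rat :: "('b \<Rightarrow>\<^sub>0 int) \<Rightarrow> 'b \<Rightarrow> rat" where
  "frag_rat c = (\<lambda>x. of_int (poly_mapping.lookup c x))"

lemma frag_rat_add: "frag_rat (a + b) = frag_rat a + frag_rat b"
  by (simp add: frag_rat_def fun_eq_iff lookup_add)

lemma frag_rat_zero: "frag_rat 0 = 0"
  by (simp add: frag_rat_def fun_eq_iff)

lemma frag_rat_cmul: "frag_rat (frag_cmul i a) = qscale (of_int i) (frag_rat a)"
  by (simp add: frag_rat_def qscale_def fun_eq_iff)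

lemma frag_rat_sum: "frag_rat (sum f A) = (\<Sum>x\<in>A. frag_rat (f x))"
  by (induction A rule: infinite_finite_induct) (auto simp: frag_rat_zero frag_rat_add)

lemma frag_rat_lincomb:
  "frag_rat (\<Sum>r\<in>R. frag_cmul (c r) r) = (\<Sum>r\<in>R. qscale (of_int (c r)) (frag_rat r))"
  by (simp add: frag_rat_sum frag_rat_cmul)

lemma inj_frag_rat: "inj frag_rat"
  by (rule injI) (auto simp: frag_rat_def fun_eq_iff intro: poly_mapping_eqI)

lemma inj_on_frag_rat: "inj_on frag_rat A"
  using inj_frag_rat by (rule inj_on_subset) simp

lemma frag_rat_image_subset_span:
  assumes "K \<subseteq> {c. Poly_Mapping.keys c \<subseteq> S}"
  shows "frag_rat ` K \<subseteq> Q.span ((\<lambda>s. frag_rat (frag_of s)) ` S)"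
proof
  fix v assume "v \<in> frag_rat ` K"
  then obtain c where c: "c \<in> K" "v = frag_rat c" by blast
  have "v = frag_rat (\<Sum>i \<in> Poly_Mapping.keys c. frag_cmul (poly_mapping.lookup c i) (frag_of i))"
    using c(2) frag_expansion[of c] by (simp add: frag_extend_def)
  also have "\<dots> = (\<Sum>i \<in> Poly_Mapping.keys c. qscale (of_int (poly_mapping.lookup c i)) (frag_rat (frag_of i)))"
    by (simp add: frag_rat_sum frag_rat_cmul)
  also have "\<dots> \<in> Q.span ((\<lambda>s. frag_rat (frag_of s)) ` S)"
    using c(1) assms by (intro Q.span_sum Q.span_scale Q.span_base) auto
  finally show "v \<in> Q.span ((\<lambda>s. frag_rat (frag_of s)) ` S)" .
qed

definition frag_submodule :: "('b \<Rightarrow>\<^sub>0 int) set \<Rightarrow> bool" where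
  "frag_submodule B \<longleftrightarrow>
     0 \<in> B \<and> (\<forall>a\<in>B. \<forall>b\<in>B. a + b \<in> B) \<and> (\<forall>a\<in>B. \<forall>i. frag_cmul i a \<in> B)"

lemma frag_submodule_sum:
  "frag_submodule B \<Longrightarrow> (\<And>x. x \<in> A \<Longrightarrow> f x \<in> B) \<Longrightarrow> sum f A \<in> B"
  by (induction A rule: infinite_finite_induct) (auto simp: frag_submodule_def)

lemma frag_submodule_diff:
  assumes "frag_submodule B" "a \<in> B" "b \<in> B"
  shows "a - b \<in> B"
proof -
  have "a + frag_cmul (-1) b \<in> B" using assms unfolding frag_submodule_def by blast
  then show ?thesis by simp
qed

definition frag_indep_mod :: "('b \<Rightarrow>\<^sub>0 int) set \<Rightarrow> ('b \<Rightarrow>\<^sub>0 int) set \<Rightarrow> bool" where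
  "frag_indep_mod B R \<longleftrightarrow> (\<forall>c. (\<Sum>r\<in>R. frag_cmul (c r) r) \<in> B \<longrightarrow> (\<forall>r\<in>R. c r = 0))"

lemma frag_indep_mod_diff_notin:
  assumes "frag_indep_mod B R" "finite R" "a \<in> R" "b \<in> R" "a \<noteq> b"
  shows "a - b \<notin> B"
proof
  assume ab: "a - b \<in> B"
  define c :: "('a \<Rightarrow>\<^sub>0 int) \<Rightarrow> int" where "c r = (if r = a then 1 else if r = b then -1 else 0)" for r
  have "(\<Sum>r\<in>R. frag_cmul (c r) r) = (\<Sum>r\<in>R. (if r = a then a else 0) + (if r = b then - b else 0))"
    by (rule sum.cong) (auto simp: c_def assms(5))
  also have "\<dots> = a - b" using assms(2-4) by (simp add: sum.distrib)
  finally have "(\<Sum>r\<in>R. frag_cmul (c r) r) \<in> B" using ab by simp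
  then have "c a = 0" using assms(1,3) unfolding frag_indep_mod_def by blast
  then show False by (simp add: c_def)
qed

lemma common_denominator:
  fixes q :: "'x \<Rightarrow> rat"
  assumes "finite R"
  shows "\<exists>D::int. D > 0 \<and> (\<forall>r\<in>R. \<exists>z::int. of_int D * q r = of_int z)"
  using assms
proof (induction R rule: finite_induct)
  case empty
  show ?case by (intro exI[of _ 1]) simp
next
  case (insert a R)
  then obtain D where D: "D > 0" "\<forall>r\<in>R. \<exists>z::int. of_int D * q r = of_int z" by blast
  obtain n d where nd: "quotient_of (q a) = (n, d)" by (cases "quotient_of (q a)")
  have d: "d > 0" "q a = of_int n / of_int d"
    using quotient_of_denom_pos[OF nd] quotient_of_div[OF nd] by auto
  have "\<forall>r\<in>insert a R. \<exists>z::int. of_int (D * d) * q r = of_int z"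
  proof
    fix r assume "r \<in> insert a R"
    show "\<exists>z::int. of_int (D * d) * q r = of_int z"
    proof (cases "r = a")
      case True
      then show ?thesis using d by (intro exI[of _ "D * n"]) simp
    next
      case False
      then obtain z where "of_int D * q r = of_int z" using D \<open>r \<in> insert a R\<close> by blast
      then show ?thesis by (intro exI[of _ "d * z"]) (simp add: algebra_simps)
    qed
  qed
  then show ?case using D(1) d(1) by (intro exI[of _ "D * d"]) simp
qed

lemma span_frag_rat_clear_denominator:
  assumes "frag_submodule B" "v \<in> Q.span (frag_rat ` B)"
  shows "\<exists>m b. m > 0 \<and> b \<in> B \<and> qscale (of_int m) v = frag_rat b"
  using assms(2)
proof (induction rule: Q.span_induct_alt)
  case base
  show ?case using assms(1)
    by (intro exI[of _ 1] exI[of _ 0]) (simp add: frag_submodule_def frag_rat_zero qscale_def zero_fun_def)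
next
  case (step c x y)
  then obtain m b where mb: "m > 0" "b \<in> B" "qscale (of_int m) y = frag_rat b" by blast
  obtain b0 where b0: "b0 \<in> B" "x = frag_rat b0" using step by blast
  obtain p q where pq: "quotient_of c = (p, q)" by (cases "quotient_of c")
  have q: "q > 0" "c = of_int p / of_int q"
    using quotient_of_denom_pos[OF pq] quotient_of_div[OF pq] by auto
  have "frag_rat b z = of_int m * y z" for z using mb(3) by (simp add: qscale_def fun_eq_iff)
  then have "qscale (of_int (q * m)) (qscale c x + y) = frag_rat (frag_cmul (p * m) b0 + frag_cmul q b)"
    unfolding frag_rat_add frag_rat_cmul using q by (simp add: qscale_def fun_eq_iff b0 field_simps)
  moreover have "frag_cmul (p * m) b0 + frag_cmul q b \<in> B"
    using assms(1) b0 mb by (simp add: frag_submodule_def)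
  moreover have "q * m > 0" using q mb by simp
  ultimately show ?case by blast
qed

text \<open>A rational relation modulo \<open>span B\<close> becomes an integral relation modulo \<open>B\<close>
  after clearing denominators.\<close>
lemma frag_indep_mod_imp_independent_mod:
  assumes B: "frag_submodule B" and R: "finite R" "frag_indep_mod B R"
  shows "independent_mod (frag_rat ` B) (frag_rat ` R)"
  unfolding independent_mod_def
proof (intro allI impI)
  fix q assume "(\<Sum>v\<in>frag_rat ` R. qscale (q v) v) \<in> Q.span (frag_rat ` B)"
  then have qs: "(\<Sum>r\<in>R. qscale (q (frag_rat r)) (frag_rat r)) \<in> Q.span (frag_rat ` B)"
    by (simp add: sum.reindex[OF inj_on_frag_rat])
  obtain D where D: "D > 0" "\<forall>r\<in>R. \<exists>z::int. of_int D * q (frag_rat r) = of_int z"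
    using common_denominator[OF R(1), of "q \<circ> frag_rat"] by auto
  then obtain z where z: "\<forall>r\<in>R. of_int D * q (frag_rat r) = of_int (z r)"
    using bchoice[OF D(2)] by blast
  have "frag_rat (\<Sum>r\<in>R. frag_cmul (z r) r) = qscale (of_int D) (\<Sum>r\<in>R. qscale (q (frag_rat r)) (frag_rat r))"
    using z by (simp add: frag_rat_lincomb Q.scale_sum_right Q.scale_scale)
  then have "frag_rat (\<Sum>r\<in>R. frag_cmul (z r) r) \<in> Q.span (frag_rat ` B)"
    using Q.span_scale[OF qs] by simp
  then obtain m b where mb: "m > 0" "b \<in> B" "qscale (of_int m) (frag_rat (\<Sum>r\<in>R. frag_cmul (z r) r)) = frag_rat b"
    using span_frag_rat_clear_denominator[OF B] by blast
  then have "frag_rat (\<Sum>r\<in>R. frag_cmul (m * z r) r) = frag_rat b"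
    by (simp add: frag_rat_lincomb Q.scale_sum_right Q.scale_scale)
  then have "(\<Sum>r\<in>R. frag_cmul (m * z r) r) = b"
    by (rule injD[OF inj_frag_rat])
  then have "(\<Sum>r\<in>R. frag_cmul (m * z r) r) \<in> B"
    using mb(2) by simp
  then have "\<forall>r\<in>R. m * z r = 0"
    by (rule spec[OF R(2)[unfolded frag_indep_mod_def], THEN mp])
  then show "\<forall>v\<in>frag_rat ` R. q v = 0" using mb(1) z D(1) by simp
qed

lemma independent_mod_imp_frag_indep_mod:
  assumes "finite R" "independent_mod (frag_rat ` B) (frag_rat ` R)"
  shows "frag_indep_mod B R"
  unfolding frag_indep_mod_def
proof (intro allI impI)
  fix c assume "(\<Sum>r\<in>R. frag_cmul (c r) r) \<in> B"
  define q where "q v = (of_int (c (inv_into UNIV frag_rat v)) :: rat)" for v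
  have "(\<Sum>v\<in>frag_rat ` R. qscale (q v) v) = frag_rat (\<Sum>r\<in>R. frag_cmul (c r) r)"
    by (simp add: sum.reindex[OF inj_on_frag_rat] q_def inv_into_f_f[OF inj_frag_rat UNIV_I] frag_rat_lincomb)
  then have "(\<Sum>v\<in>frag_rat ` R. qscale (q v) v) \<in> Q.span (frag_rat ` B)"
    using \<open>(\<Sum>r\<in>R. frag_cmul (c r) r) \<in> B\<close> by (simp add: Q.span_base)
  then have "\<forall>v\<in>frag_rat ` R. q v = 0" using assms(2) unfolding independent_mod_def by blast
  then show "\<forall>r\<in>R. c r = 0" by (simp add: q_def inv_into_f_f[OF inj_frag_rat UNIV_I])
qed

definition frag_rank_mod :: "('b \<Rightarrow>\<^sub>0 int) set \<Rightarrow> ('b \<Rightarrow>\<^sub>0 int) set \<Rightarrow> nat" where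
  "frag_rank_mod K B = Sup {card R | R. finite R \<and> R \<subseteq> K \<and> frag_indep_mod B R}"

lemma frag_rank_mod_eq_dim_diff:
  assumes S: "finite S" and K: "K \<subseteq> {c. Poly_Mapping.keys c \<subseteq> S}"
    and B: "frag_submodule B" "B \<subseteq> K"
  shows "frag_rank_mod K B = Q.dim (frag_rat ` K) - Q.dim (frag_rat ` B)"
  unfolding frag_rank_mod_def
proof (rule cSup_eq_maximum)
  let ?E = "(\<lambda>s. frag_rat (frag_of s)) ` S"
  have E: "finite ?E" "frag_rat ` K \<subseteq> Q.span ?E"
    using S frag_rat_image_subset_span[OF K] by auto
  have BK: "frag_rat ` B \<subseteq> frag_rat ` K" using B by auto
  obtain R' where R': "finite R'" "R' \<subseteq> frag_rat ` K" "independent_mod (frag_rat ` B) R'"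
    "card R' + Q.dim (frag_rat ` B) = Q.dim (frag_rat ` K)"
    by (rule independent_mod_complement_exists[OF E BK])
  define R where "R = K \<inter> frag_rat -` R'"
  have eR: "frag_rat ` R = R'" using R'(2) R_def by auto
  have R: "card R = card R'" "finite R"
    using card_image[OF inj_on_frag_rat, of R] finite_imageD[of frag_rat R] inj_on_frag_rat eR R'(1)
    by auto
  then have "frag_indep_mod B R"
    using independent_mod_imp_frag_indep_mod[OF R(2)] R'(3) eR by simp
  then show "Q.dim (frag_rat ` K) - Q.dim (frag_rat ` B)
      \<in> {card R | R. finite R \<and> R \<subseteq> K \<and> frag_indep_mod B R}"
    using R R'(4) R_def by (intro CollectI exI[of _ R]) auto
  fix x assume "x \<in> {card R | R. finite R \<and> R \<subseteq> K \<and> frag_indep_mod B R}"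
  then obtain R where R: "x = card R" "finite R" "R \<subseteq> K" "frag_indep_mod B R" by blast
  have "card (frag_rat ` R) + Q.dim (frag_rat ` B) \<le> Q.dim (frag_rat ` K)"
    using independent_mod_card_le[OF E BK] R frag_indep_mod_imp_independent_mod[OF B(1) R(2,4)]
    by blast
  then show "x \<le> Q.dim (frag_rat ` K) - Q.dim (frag_rat ` B)"
    using R(1) card_image[OF inj_on_frag_rat, of R] by linarith
qed

lemma dim_frag_rat_mono:
  assumes "finite S" "K \<subseteq> {c. Poly_Mapping.keys c \<subseteq> S}" "B \<subseteq> K"
  shows "Q.dim (frag_rat ` B) \<le> Q.dim (frag_rat ` K)"
  using assms(3)
  by (intro dim_mono_finite_span[OF _ frag_rat_image_subset_span[OF assms(2)]]) (auto simp: assms(1))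

lemma dim_singleton_zero: "Q.dim {0 :: 'b \<Rightarrow> rat} = 0"
  using Q.dim_eq_card[of "{}" "{0}"] by (simp add: Q.span_insert_0 Q.independent_empty)

lemma frag_rank_mod_zero_eq_dim:
  assumes "finite S" "K \<subseteq> {c. Poly_Mapping.keys c \<subseteq> S}" "frag_submodule K"
  shows "frag_rank_mod K {0} = Q.dim (frag_rat ` K)"
  using assms frag_rank_mod_eq_dim_diff[OF assms(1,2), of "{0}"]
  by (simp add: frag_submodule_def frag_rat_zero dim_singleton_zero)

definition frag_linear :: "(('a \<Rightarrow>\<^sub>0 int) \<Rightarrow> 'b \<Rightarrow>\<^sub>0 int) \<Rightarrow> bool" where
  "frag_linear f \<longleftrightarrow> (\<forall>a b. f (a + b) = f a + f b) \<and> (\<forall>k a. f (frag_cmul k a) = frag_cmul k (f a))"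

lemma frag_linear_lincomb:
  assumes "frag_linear f"
  shows "f (\<Sum>r\<in>R. frag_cmul (c r) r) = (\<Sum>r\<in>R. frag_cmul (c r) (f r))"
proof -
  have "f 0 = 0" using assms unfolding frag_linear_def by (metis add_cancel_right_right)
  then show ?thesis
    using assms unfolding frag_linear_def by (induction R rule: infinite_finite_induct) simp_all
qed

lemma frag_linear_diff: "frag_linear f \<Longrightarrow> f (a - b) = f a - f b"
  unfolding frag_linear_def by (metis add_diff_cancel diff_add_cancel)

lemma frag_indep_mod_image_iff:
  assumes f: "frag_linear f" and K: "frag_submodule K" and U: "U \<subseteq> K" "inj_on f U"
  shows "frag_indep_mod {0} (f ` U) \<longleftrightarrow> frag_indep_mod {c \<in> K. f c = 0} U"
proof -
  have reindex: "(\<Sum>y\<in>f ` U. frag_cmul (c y) y) = f (\<Sum>r\<in>U. frag_cmul (c (f r)) r)" for c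
    using U(2) by (simp add: frag_linear_lincomb[OF f] sum.reindex)
  have inK: "(\<Sum>r\<in>U. frag_cmul (c r) r) \<in> K" for c
    using K U(1) by (intro frag_submodule_sum) (auto simp: frag_submodule_def)
  show ?thesis
    unfolding frag_indep_mod_def
  proof (intro iffI allI impI)
    fix c assume indep: "\<forall>c. (\<Sum>y\<in>f ` U. frag_cmul (c y) y) \<in> {0} \<longrightarrow> (\<forall>y\<in>f ` U. c y = 0)"
      and "(\<Sum>r\<in>U. frag_cmul (c r) r) \<in> {c \<in> K. f c = 0}"
    moreover have "(\<Sum>r\<in>U. frag_cmul (c r) r) = (\<Sum>r\<in>U. frag_cmul (c (inv_into U f (f r))) r)"
      using U(2) by (intro sum.cong) auto
    ultimately have "(\<Sum>y\<in>f ` U. frag_cmul (c (inv_into U f y)) y) \<in> {0}"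
      using reindex[of "\<lambda>y. c (inv_into U f y)"] by simp
    then have "\<forall>y\<in>f ` U. c (inv_into U f y) = 0"
      by (rule spec[OF indep, THEN mp])
    then show "\<forall>r\<in>U. c r = 0" using U(2) by simp
  next
    fix c assume indep: "\<forall>c. (\<Sum>r\<in>U. frag_cmul (c r) r) \<in> {c \<in> K. f c = 0} \<longrightarrow> (\<forall>r\<in>U. c r = 0)"
      and "(\<Sum>y\<in>f ` U. frag_cmul (c y) y) \<in> {0}"
    then have "(\<Sum>r\<in>U. frag_cmul (c (f r)) r) \<in> {c \<in> K. f c = 0}" using reindex[of c] inK by simp
    then have "\<forall>r\<in>U. c (f r) = 0" by (rule spec[OF indep, THEN mp])
    then show "\<forall>y\<in>f ` U. c y = 0" by blast
  qed
qed

lemma inj_on_if_frag_indep_mod_kernel: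
  assumes f: "frag_linear f" and K: "frag_submodule K"
    and R: "finite R" "R \<subseteq> K" "frag_indep_mod {c \<in> K. f c = 0} R"
  shows "inj_on f R"
proof (rule inj_onI, rule ccontr)
  fix a b assume ab: "a \<in> R" "b \<in> R" "f a = f b" "a \<noteq> b"
  then have "a - b \<in> {c \<in> K. f c = 0}"
    using frag_submodule_diff[OF K] R(2) frag_linear_diff[OF f] by auto
  then show False using frag_indep_mod_diff_notin[OF R(3,1) ab(1,2,4)] by blast
qed

lemma frag_rank_mod_kernel_eq_image:
  assumes f: "frag_linear f" and K: "frag_submodule K"
  shows "frag_rank_mod K {c \<in> K. f c = 0} = frag_rank_mod (f ` K) {0}"
proof -
  have "{card R | R. finite R \<and> R \<subseteq> K \<and> frag_indep_mod {c \<in> K. f c = 0} R}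
      = {card R | R. finite R \<and> R \<subseteq> f ` K \<and> frag_indep_mod {0} R}"
  proof (intro Set.set_eqI iffI)
    fix n assume "n \<in> {card R | R. finite R \<and> R \<subseteq> K \<and> frag_indep_mod {c \<in> K. f c = 0} R}"
    then obtain R where R: "n = card R" "finite R" "R \<subseteq> K" "frag_indep_mod {c \<in> K. f c = 0} R"
      by blast
    then have "inj_on f R" by (intro inj_on_if_frag_indep_mod_kernel[OF f K])
    then show "n \<in> {card R | R. finite R \<and> R \<subseteq> f ` K \<and> frag_indep_mod {0} R}"
      using R frag_indep_mod_image_iff[OF f K] card_image[of f R] by (intro CollectI exI[of _ "f ` R"]) auto
  next
    fix n assume "n \<in> {card R | R. finite R \<and> R \<subseteq> f ` K \<and> frag_indep_mod {0} R}"
    then obtain R where R: "n = card R" "finite R" "R \<subseteq> f ` K" "frag_indep_mod {0} R" by blast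
    then obtain U where U: "U \<subseteq> K" "inj_on f U" "R = f ` U" by (meson subset_image_inj)
    then show "n \<in> {card R | R. finite R \<and> R \<subseteq> K \<and> frag_indep_mod {c \<in> K. f c = 0} R}"
      using R frag_indep_mod_image_iff[OF f K] card_image finite_imageD by (intro CollectI exI[of _ U]) auto
  qed
  then show ?thesis unfolding frag_rank_mod_def by simp
qed

definition indep_mod :: "('g, 'm) monoid_scheme \<Rightarrow> 'g set \<Rightarrow> 'g set \<Rightarrow> bool" where
  "indep_mod G H R \<longleftrightarrow> (\<forall>c::'g \<Rightarrow> int. finprod G (\<lambda>r. r [^]\<^bsub>G\<^esub> c r) R \<in> H \<longrightarrow> (\<forall>r\<in>R. c r = 0))"

lemma (in comm_group) finprod_rcos_int_pow:
  assumes H: "subgroup H G" and R: "finite R" "R \<subseteq> carrier G"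
  shows "finprod (G Mod H) (\<lambda>r. (H #> r) [^]\<^bsub>G Mod H\<^esub> (c r :: int)) R = H #> finprod G (\<lambda>r. r [^] c r) R"
proof -
  interpret N: normal H G using H subgroup_imp_normal by blast
  interpret Q: comm_group "G Mod H" using abelian_FactGroup[OF H] .
  interpret h: group_hom G "G Mod H" "\<lambda>a. H #> a"
    by (simp add: N.r_coset_hom_Mod N.factorgroup_is_group group_hom_axioms_def group_hom_def is_group)
  show ?thesis
    using R
  proof (induction R rule: finite_induct)
    case empty
    then show ?case using N.rcos_const[OF is_group N.one_closed] by simp
  next
    case (insert a R)
    have "finprod (G Mod H) (\<lambda>r. (H #> r) [^]\<^bsub>G Mod H\<^esub> c r) (insert a R)
        = (H #> a) [^]\<^bsub>G Mod H\<^esub> c a \<otimes>\<^bsub>G Mod H\<^esub> finprod (G Mod H) (\<lambda>r. (H #> r) [^]\<^bsub>G Mod H\<^esub> c r) R"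
      using insert h.hom_closed by (intro Q.finprod_insert) auto
    also have "\<dots> = (H #> (a [^] c a)) \<otimes>\<^bsub>G Mod H\<^esub> (H #> finprod G (\<lambda>r. r [^] c r) R)"
      using insert h.hom_int_pow by simp
    also have "\<dots> = H #> (a [^] c a \<otimes> finprod G (\<lambda>r. r [^] c r) R)"
      using insert by (intro h.hom_mult[symmetric]) (auto intro!: finprod_closed)
    also have "a [^] c a \<otimes> finprod G (\<lambda>r. r [^] c r) R = finprod G (\<lambda>r. r [^] c r) (insert a R)"
      using insert by (intro finprod_insert[symmetric]) auto
    finally show ?case .
  qed
qed

lemma (in group) rcos_eq_self_iff:
  assumes "subgroup H G" "x \<in> carrier G"
  shows "H #> x = H \<longleftrightarrow> x \<in> H"
  using subgroup.rcos_const[OF assms(1) is_group] rcos_self[OF assms(2,1)] by auto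

lemma (in comm_group) inj_on_rcos_if_indep_mod:
  assumes H: "subgroup H G" and R: "finite R" "R \<subseteq> carrier G" "indep_mod G H R"
  shows "inj_on (\<lambda>a. H #> a) R"
proof (rule inj_onI, rule ccontr)
  fix a b assume ab: "a \<in> R" "b \<in> R" "H #> a = H #> b" "a \<noteq> b"
  define c :: "'a \<Rightarrow> int" where "c r = (if r = a then 1 else if r = b then -1 else 0)" for r
  define R0 where "R0 = R - {a, b}"
  have R0: "finite R0" "a \<notin> R0" "b \<notin> R0" "R = insert a (insert b R0)" "R0 \<subseteq> carrier G"
    using R ab R0_def by auto
  have G: "a \<in> carrier G" "b \<in> carrier G" using ab R by auto
  have "finprod G (\<lambda>r. r [^] c r) R
      = a [^] c a \<otimes> (b [^] c b \<otimes> finprod G (\<lambda>r. r [^] c r) R0)"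
    using R0 G ab(4) by (simp add: Pi_def subset_iff)
  also have "finprod G (\<lambda>r. r [^] c r) R0 = \<one>"
    using R0 by (intro finprod_one_eqI) (auto simp: c_def)
  also have "a [^] c a \<otimes> (b [^] c b \<otimes> \<one>) = a \<otimes> inv b"
    using ab G by (simp add: c_def int_pow_neg)
  also have "a \<otimes> inv b \<in> H"
    using ab(3) rcos_self[OF G(1) H] subgroup.rcos_module_imp[OF H is_group G(2)] by simp
  finally have "c a = 0" using R(3) ab(1) unfolding indep_mod_def by blast
  then show False by (simp add: c_def)
qed

lemma (in comm_group) finprod_rcos_image_int_pow:
  assumes H: "subgroup H G" and R: "finite R" "R \<subseteq> carrier G" "inj_on (\<lambda>a. H #> a) R"
  shows "finprod (G Mod H) (\<lambda>t. t [^]\<^bsub>G Mod H\<^esub> (c t :: int)) ((\<lambda>a. H #> a) ` R)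
    = H #> finprod G (\<lambda>r. r [^] c (H #> r)) R"
proof -
  interpret Q: comm_group "G Mod H" using abelian_FactGroup[OF H] .
  have "H #> r \<in> carrier (G Mod H)" if "r \<in> carrier G" for r
    using that by (auto simp: carrier_FactGroup)
  then have "finprod (G Mod H) (\<lambda>t. t [^]\<^bsub>G Mod H\<^esub> c t) ((\<lambda>a. H #> a) ` R)
      = finprod (G Mod H) (\<lambda>r. (H #> r) [^]\<^bsub>G Mod H\<^esub> c (H #> r)) R"
    using R by (intro Q.finprod_reindex) auto
  then show ?thesis using finprod_rcos_int_pow[OF H R(1,2)] by simp
qed

lemma (in comm_group) lin_indep_Z_rcos_image_iff:
  assumes H: "subgroup H G" and R: "finite R" "R \<subseteq> carrier G" "inj_on (\<lambda>a. H #> a) R"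
  shows "lin_indep_Z (G Mod H) ((\<lambda>a. H #> a) ` R) \<longleftrightarrow> indep_mod G H R"
proof -
  have one: "H #> finprod G (\<lambda>r. r [^] c r) R = H \<longleftrightarrow> finprod G (\<lambda>r. r [^] c r) R \<in> H"
    for c :: "'a \<Rightarrow> int"
    using R(2) by (intro rcos_eq_self_iff[OF H]) (auto intro: finprod_closed)
  show ?thesis
    unfolding lin_indep_Z_def indep_mod_def
  proof (intro iffI allI impI)
    fix c :: "'a \<Rightarrow> int"
    assume indep: "\<forall>c' :: 'a set \<Rightarrow> int. finprod (G Mod H) (\<lambda>t. t [^]\<^bsub>G Mod H\<^esub> c' t) ((\<lambda>a. H #> a) ` R) = \<one>\<^bsub>G Mod H\<^esub>
        \<longrightarrow> (\<forall>t\<in>(\<lambda>a. H #> a) ` R. c' t = 0)"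
      and "finprod G (\<lambda>r. r [^] c r) R \<in> H"
    moreover have "finprod G (\<lambda>r. r [^] c (inv_into R (\<lambda>a. H #> a) (H #> r))) R = finprod G (\<lambda>r. r [^] c r) R"
      using R by (intro finprod_cong') auto
    ultimately have "finprod (G Mod H) (\<lambda>t. t [^]\<^bsub>G Mod H\<^esub> c (inv_into R (\<lambda>a. H #> a) t))
        ((\<lambda>a. H #> a) ` R) = \<one>\<^bsub>G Mod H\<^esub>"
      using finprod_rcos_image_int_pow[OF H R, of "\<lambda>t. c (inv_into R (\<lambda>a. H #> a) t)"] one[of c]
      by simp
    then have "\<forall>t\<in>(\<lambda>a. H #> a) ` R. c (inv_into R (\<lambda>a. H #> a) t) = 0"
      by (rule spec[OF indep, THEN mp])
    then show "\<forall>r\<in>R. c r = 0" using R(3) by simp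
  next
    fix c :: "'a set \<Rightarrow> int"
    assume indep: "\<forall>c' :: 'a \<Rightarrow> int. finprod G (\<lambda>r. r [^] c' r) R \<in> H \<longrightarrow> (\<forall>r\<in>R. c' r = 0)"
      and "finprod (G Mod H) (\<lambda>t. t [^]\<^bsub>G Mod H\<^esub> c t) ((\<lambda>a. H #> a) ` R) = \<one>\<^bsub>G Mod H\<^esub>"
    then have "finprod G (\<lambda>r. r [^] c (H #> r)) R \<in> H"
      using finprod_rcos_image_int_pow[OF H R, of c] one[of "\<lambda>r. c (H #> r)"] by simp
    then have "\<forall>r\<in>R. c (H #> r) = 0" by (rule spec[OF indep, THEN mp])
    then show "\<forall>t\<in>(\<lambda>a. H #> a) ` R. c t = 0" by blast
  qed
qed

lemma (in comm_group) ab_rank_FactGroup: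
  assumes H: "subgroup H G"
  shows "ab_rank (G Mod H) = Sup {card R | R. finite R \<and> R \<subseteq> carrier G \<and> indep_mod G H R}"
proof -
  have "{card T | T. finite T \<and> T \<subseteq> carrier (G Mod H) \<and> lin_indep_Z (G Mod H) T}
      = {card R | R. finite R \<and> R \<subseteq> carrier G \<and> indep_mod G H R}"
  proof (intro Set.set_eqI iffI)
    fix n assume "n \<in> {card T | T. finite T \<and> T \<subseteq> carrier (G Mod H) \<and> lin_indep_Z (G Mod H) T}"
    then obtain T where T: "n = card T" "finite T" "T \<subseteq> (\<lambda>a. H #> a) ` carrier G"
        "lin_indep_Z (G Mod H) T"
      by (auto simp: carrier_FactGroup)
    then obtain R where R: "R \<subseteq> carrier G" "inj_on (\<lambda>a. H #> a) R" "T = (\<lambda>a. H #> a) ` R"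
      by (meson subset_image_inj)
    then have "finite R" using T(2) finite_imageD by blast
    then show "n \<in> {card R | R. finite R \<and> R \<subseteq> carrier G \<and> indep_mod G H R}"
      using T R lin_indep_Z_rcos_image_iff[OF H] card_image by (intro CollectI exI[of _ R]) auto
  next
    fix n assume "n \<in> {card R | R. finite R \<and> R \<subseteq> carrier G \<and> indep_mod G H R}"
    then obtain R where R: "n = card R" "finite R" "R \<subseteq> carrier G" "indep_mod G H R" by blast
    then have inj: "inj_on (\<lambda>a. H #> a) R" by (intro inj_on_rcos_if_indep_mod[OF H])
    then show "n \<in> {card T | T. finite T \<and> T \<subseteq> carrier (G Mod H) \<and> lin_indep_Z (G Mod H) T}"
      using R lin_indep_Z_rcos_image_iff[OF H R(2,3) inj] card_image[OF inj]
      by (intro CollectI exI[of _ "(\<lambda>a. H #> a) ` R"]) (auto simp: carrier_FactGroup)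
  qed
  then show ?thesis unfolding ab_rank_def by simp
qed

lemma finprod_eq_sum:
  fixes G :: "('b::comm_monoid_add) monoid"
  assumes G: "comm_monoid G" "\<And>x y. x \<in> carrier G \<Longrightarrow> y \<in> carrier G \<Longrightarrow> x \<otimes>\<^bsub>G\<^esub> y = x + y"
    "\<one>\<^bsub>G\<^esub> = 0"
    and A: "finite A" "f \<in> A \<rightarrow> carrier G"
  shows "finprod G f A = sum f A"
  using A
proof (induction A rule: finite_induct)
  case empty
  then show ?case using G by (simp add: comm_monoid.finprod_empty)
next
  case (insert a A)
  then have "finprod G f (insert a A) = f a \<otimes>\<^bsub>G\<^esub> finprod G f A"
    by (intro comm_monoid.finprod_insert[OF G(1)]) auto
  also have "\<dots> = f a + finprod G f A"
    using insert.prems by (intro G(2)) (auto intro: comm_monoid.finprod_closed[OF G(1)])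
  finally show ?case using insert by simp
qed

lemma frag_submodule_imp_subgroup:
  assumes "frag_submodule K" "K \<subseteq> {c. Poly_Mapping.keys c \<subseteq> S}"
  shows "subgroup K (free_Abelian_group S)"
proof (rule group.subgroupI)
  show "group (free_Abelian_group S)" by simp
  show "K \<subseteq> carrier (free_Abelian_group S)" using assms(2) by auto
  show "K \<noteq> {}" using assms(1) by (auto simp: frag_submodule_def)
  fix a b assume "a \<in> K" "b \<in> K"
  then show "a \<otimes>\<^bsub>free_Abelian_group S\<^esub> b \<in> K" using assms(1) by (simp add: frag_submodule_def)
next
  fix a assume a: "a \<in> K"
  then have "inv\<^bsub>free_Abelian_group S\<^esub> a = frag_cmul (-1) a" using assms(2) by auto
  moreover have "frag_cmul (-1) a \<in> K" using a assms(1) unfolding frag_submodule_def by blast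
  ultimately show "inv\<^bsub>free_Abelian_group S\<^esub> a \<in> K" by simp
qed

lemma finprod_int_pow_subgroup_generated_free:
  assumes K: "subgroup K (free_Abelian_group S)" and R: "finite R" "R \<subseteq> K"
  shows "finprod (subgroup_generated (free_Abelian_group S) K)
      (\<lambda>r. r [^]\<^bsub>subgroup_generated (free_Abelian_group S) K\<^esub> (c r :: int)) R
    = (\<Sum>r\<in>R. frag_cmul (c r) r)"
proof -
  let ?F = "free_Abelian_group S"
  let ?G = "subgroup_generated ?F K"
  have cG: "carrier ?G = K" using subgroup.carrier_subgroup_generated_subgroup[OF K] .
  have grp: "group ?F" by simp
  have cgG: "comm_group ?G"
    using group.abelian_subgroup_generated[OF grp abelian_free_Abelian_group] .
  have pow: "r [^]\<^bsub>?G\<^esub> (i::int) = frag_cmul i r" if "r \<in> K" for r i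
    using that subgroup.subset[OF K] group.int_pow_subgroup_generated[OF grp] cG by auto
  have "finprod ?G (\<lambda>r. r [^]\<^bsub>?G\<^esub> c r) R = (\<Sum>r\<in>R. r [^]\<^bsub>?G\<^esub> c r)"
    using R cG by (intro finprod_eq_sum comm_group.axioms(1)[OF cgG])
      (auto intro!: group.int_pow_closed[OF comm_group.axioms(2)[OF cgG]])
  also have "\<dots> = (\<Sum>r\<in>R. frag_cmul (c r) r)"
    using R pow by (intro sum.cong) auto
  finally show ?thesis .
qed

lemma ab_rank_free_Abelian_group:
  "ab_rank (free_Abelian_group S) = frag_rank_mod {c. Poly_Mapping.keys c \<subseteq> S} {0}"
proof -
  let ?F = "free_Abelian_group S"
  have F: "subgroup_generated ?F (carrier ?F) = ?F"
    by (simp add: group.subgroup_generated_group_carrier)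
  have cF: "carrier ?F = {c. Poly_Mapping.keys c \<subseteq> S}" by auto
  have "lin_indep_Z ?F R \<longleftrightarrow> frag_indep_mod {0} R" if "finite R" "R \<subseteq> {c. Poly_Mapping.keys c \<subseteq> S}" for R
    using finprod_int_pow_subgroup_generated_free[OF group.subgroup_self that[folded cF]] F that
    unfolding lin_indep_Z_def frag_indep_mod_def by simp
  then have "(finite R \<and> R \<subseteq> carrier ?F \<and> lin_indep_Z ?F R)
      \<longleftrightarrow> (finite R \<and> R \<subseteq> {c. Poly_Mapping.keys c \<subseteq> S} \<and> frag_indep_mod {0} R)" for R
    unfolding cF by blast
  then show ?thesis
    unfolding ab_rank_def frag_rank_mod_def by presburger
qed

lemma ab_rank_subgroup_generated_free_Mod:
  assumes K: "subgroup K (free_Abelian_group S)" and B: "subgroup B (free_Abelian_group S)" "B \<subseteq> K"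
  shows "ab_rank (subgroup_generated (free_Abelian_group S) K Mod B) = frag_rank_mod K B"
proof -
  let ?F = "free_Abelian_group S"
  let ?G = "subgroup_generated ?F K"
  have grp: "group ?F" by simp
  have cG: "carrier ?G = K" using subgroup.carrier_subgroup_generated_subgroup[OF K] .
  have cgG: "comm_group ?G"
    using group.abelian_subgroup_generated[OF grp abelian_free_Abelian_group] .
  have BG: "subgroup B ?G" using group.subgroup_of_subgroup_generated[OF grp B(2,1)] .
  have "indep_mod ?G B R \<longleftrightarrow> frag_indep_mod B R" if "finite R" "R \<subseteq> K" for R
    unfolding indep_mod_def frag_indep_mod_def
    using finprod_int_pow_subgroup_generated_free[OF K that] by simp
  then have "(finite R \<and> R \<subseteq> carrier ?G \<and> indep_mod ?G B R)
      \<longleftrightarrow> (finite R \<and> R \<subseteq> K \<and> frag_indep_mod B R)" for R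
    unfolding cG by blast
  then show ?thesis
    unfolding comm_group.ab_rank_FactGroup[OF cgG BG] frag_rank_mod_def by presburger
qed

section \<open>Faces and boundaries of the magnitude nerve\<close>

lemma quasi_metricD:
  assumes "quasi_metric X d"
  shows "\<And>x y. x \<in> X \<Longrightarrow> y \<in> X \<Longrightarrow> 0 \<le> d x y"
    and "\<And>x. x \<in> X \<Longrightarrow> d x x = 0"
    and "\<And>x y z. x \<in> X \<Longrightarrow> y \<in> X \<Longrightarrow> z \<in> X \<Longrightarrow> d x z \<le> d x y + d y z"
    and "\<And>x y. x \<in> X \<Longrightarrow> y \<in> X \<Longrightarrow> x \<noteq> y \<Longrightarrow> 0 < d x y"
  using assms unfolding quasi_metric_def by blast+

fun path_length :: "('a \<Rightarrow> 'a \<Rightarrow> real) \<Rightarrow> 'a list \<Rightarrow> real" where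
  "path_length d (x # y # zs) = d x y + path_length d (y # zs)"
| "path_length d _ = 0"

lemma tuple_length_eq_path_length: "tuple_length d xs = path_length d xs"
proof (induction d xs rule: path_length.induct)
  case (1 d x y zs)
  have "tuple_length d (x # y # zs)
      = d x y + (\<Sum>i<length zs. d ((y # zs) ! i) ((y # zs) ! Suc i))"
    by (simp add: tuple_length_def sum.lessThan_Suc_shift del: sum.lessThan_Suc)
  then show ?case using 1 by (simp add: tuple_length_def)
qed (auto simp: tuple_length_def)

lemma path_length_append: "path_length d (xs @ y # ys) = path_length d (xs @ [y]) + path_length d (y # ys)"
  by (induction d xs rule: path_length.induct) auto

lemma path_length_delete_inner:
  "path_length d (A @ [p, a, b] @ B) = path_length d (A @ [p, b] @ B) + d p a + d a b - d p b"
  using path_length_append[of d "A @ [p]" a "b # B"] path_length_append[of d "A @ [p]" b B]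
    path_length_append[of d A p "[a]"] path_length_append[of d A p "[b]"]
  by simp

lemma path_length_delete_le:
  assumes qm: "quasi_metric X d" and X: "set (A @ a # B) \<subseteq> X"
  shows "path_length d (A @ B) \<le> path_length d (A @ a # B)"
proof (cases A rule: rev_exhaust)
  case Nil
  then show ?thesis using X quasi_metricD(1)[OF qm] by (cases B) auto
next
  case (snoc A' p)
  show ?thesis
  proof (cases B)
    case Nil
    then show ?thesis
      using snoc X quasi_metricD(1)[OF qm, of p a] path_length_append[of d A' p "[a]"] by simp
  next
    case (Cons b B')
    then show ?thesis
      using snoc X quasi_metricD(3)[OF qm, of p a b] path_length_delete_inner[of d A' p a b B'] by simp
  qed
qed

text \<open>If deleting a point keeps the length, its neighbours differ: otherwise the deleted detour
  \<open>p \<rightarrow> a \<rightarrow> p\<close> would have length zero, contradicting skeletality.\<close>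
lemma successively_delete_if_path_length_eq:
  assumes qm: "quasi_metric X d" and X: "set (A @ a # B) \<subseteq> X"
    and succ: "successively (\<noteq>) (A @ a # B)"
    and eq: "path_length d (A @ B) = path_length d (A @ a # B)"
  shows "successively (\<noteq>) (A @ B)"
proof (cases A rule: rev_exhaust)
  case Nil
  then show ?thesis using succ by (cases B) auto
next
  case (snoc A' p)
  show ?thesis
  proof (cases B)
    case Nil
    then show ?thesis using succ snoc by (auto simp: successively_append_iff)
  next
    case (Cons b B')
    have Xpab: "p \<in> X" "a \<in> X" "b \<in> X" using X snoc Cons by auto
    have "p \<noteq> a" using succ snoc by (auto simp: successively_append_iff)
    have "p \<noteq> b"
    proof
      assume "p = b"
      then have "d p a + d a p = 0"
        using eq snoc Cons path_length_delete_inner[of d A' p a b B'] quasi_metricD(2)[OF qm] Xpab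
        by simp
      moreover have "0 < d p a" "0 \<le> d a p"
        using quasi_metricD(4)[OF qm] quasi_metricD(1)[OF qm] Xpab \<open>p \<noteq> a\<close> by auto
      ultimately show False by simp
    qed
    then show ?thesis using succ snoc Cons by (auto simp: successively_append_iff)
  qed
qed

lemma length_delete_at: "i < length xs \<Longrightarrow> length (delete_at i xs) = length xs - 1"
  by (simp add: delete_at_def)

lemma nth_delete_at: "i < length xs \<Longrightarrow> k < length xs - 1 \<Longrightarrow>
   delete_at i xs ! k = (if k < i then xs ! k else xs ! Suc k)"
  by (auto simp: delete_at_def nth_append min_def)

lemma set_delete_at: "set (delete_at i xs) \<subseteq> set xs"
  unfolding delete_at_def using set_take_subset set_drop_subset by fastforce

lemma delete_at_delete_at:
  assumes "i < j" "j < length xs"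
  shows "delete_at i (delete_at j xs) = delete_at (j - 1) (delete_at i xs)"
proof (rule nth_equalityI)
  show "length (delete_at i (delete_at j xs)) = length (delete_at (j - 1) (delete_at i xs))"
    using assms by (simp add: length_delete_at)
  fix k assume "k < length (delete_at i (delete_at j xs))"
  then show "delete_at i (delete_at j xs) ! k = delete_at (j - 1) (delete_at i xs) ! k"
    using assms by (auto simp add: nth_delete_at length_delete_at)
qed

lemma delete_at_split:
  assumes "i < length xs"
  obtains A a B where "xs = A @ a # B" "delete_at i xs = A @ B"
  using assms id_take_nth_drop[OF assms] by (auto simp: delete_at_def)

lemma tuple_length_delete_at_le:
  assumes "quasi_metric X d" "set xs \<subseteq> X"
  shows "tuple_length d (delete_at i xs) \<le> tuple_length d xs"
proof (cases "i < length xs")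
  case True
  then obtain A a B where "xs = A @ a # B" "delete_at i xs = A @ B" by (rule delete_at_split)
  then show ?thesis using path_length_delete_le assms by (simp add: tuple_length_eq_path_length)
qed (simp add: delete_at_def)

lemma delete_at_in_nerve_gens:
  assumes qm: "quasi_metric X d" and xs: "xs \<in> nerve_gens X d (Suc n) l" and i: "i \<le> Suc n"
    and eq: "tuple_length d (delete_at i xs) = tuple_length d xs"
  shows "delete_at i xs \<in> nerve_gens X d n l"
proof -
  have len: "length xs = Suc (Suc n)" and X: "set xs \<subseteq> X" and succ: "successively (\<noteq>) xs"
    using xs by (auto simp: nerve_gens_def successively_conv_nth)
  then have il: "i < length xs" using i by simp
  then obtain A a B where "xs = A @ a # B" "delete_at i xs = A @ B" by (rule delete_at_split)
  then have "successively (\<noteq>) (delete_at i xs)"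
    using successively_delete_if_path_length_eq[OF qm] X succ eq by (simp add: tuple_length_eq_path_length)
  then show ?thesis using xs len X eq il set_delete_at[of i xs]
    by (auto simp: nerve_gens_def successively_conv_nth length_delete_at)
qed

lemma nerve_boundary_add: "nerve_boundary d n (a + b) = nerve_boundary d n a + nerve_boundary d n b"
  by (simp add: nerve_boundary_def frag_extend_add)

lemma nerve_boundary_cmul: "nerve_boundary d n (frag_cmul k a) = frag_cmul k (nerve_boundary d n a)"
  by (simp add: nerve_boundary_def frag_extend_cmul)

lemma nerve_boundary_zero: "nerve_boundary d n 0 = 0"
  by (simp add: nerve_boundary_def)

lemma nerve_boundary_sum: "nerve_boundary d n (sum f A) = (\<Sum>a\<in>A. nerve_boundary d n (f a))"
  by (induction A rule: infinite_finite_induct) (auto simp: nerve_boundary_zero nerve_boundary_add)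

lemma keys_nerve_boundary_subset:
  assumes qm: "quasi_metric X d" and c: "Poly_Mapping.keys c \<subseteq> nerve_gens X d (Suc n) l"
  shows "Poly_Mapping.keys (nerve_boundary d (Suc n) c) \<subseteq> nerve_gens X d n l"
proof -
  have "Poly_Mapping.keys (\<Sum>i\<le>Suc n. frag_cmul ((-1) ^ i) (nerve_face d i x)) \<subseteq> nerve_gens X d n l"
    if x: "x \<in> Poly_Mapping.keys c" for x
  proof -
    have "Poly_Mapping.keys (\<Sum>i\<le>Suc n. frag_cmul ((-1) ^ i) (nerve_face d i x))
        \<subseteq> (\<Union>i\<le>Suc n. Poly_Mapping.keys (frag_cmul ((-1) ^ i) (nerve_face d i x)))"
      by (rule keys_sum)
    also have "\<dots> \<subseteq> (\<Union>i\<le>Suc n. Poly_Mapping.keys (nerve_face d i x))"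
      using keys_cmul by blast
    also have "\<dots> \<subseteq> nerve_gens X d n l"
      using delete_at_in_nerve_gens[OF qm] x c by (auto simp: nerve_face_def split: if_splits)
    finally show ?thesis .
  qed
  moreover have "Poly_Mapping.keys (nerve_boundary d (Suc n) c)
      \<subseteq> (\<Union>x \<in> Poly_Mapping.keys c. Poly_Mapping.keys (\<Sum>i\<le>Suc n. frag_cmul ((-1) ^ i) (nerve_face d i x)))"
    unfolding nerve_boundary_def by (simp add: keys_frag_extend)
  ultimately show ?thesis by blast
qed

text \<open>The simplicial identity behind \<open>\<partial> \<circ> \<partial> = 0\<close>: terms \<open>(i, j)\<close> with \<open>i < j\<close>
  cancel against \<open>(j - 1, i)\<close>.\<close>
lemma sum_simplicial_pairs_cancel:
  fixes G :: "nat \<Rightarrow> nat \<Rightarrow> 'x \<Rightarrow>\<^sub>0 int"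
  assumes G: "\<And>i j. i < j \<Longrightarrow> j \<le> Suc N \<Longrightarrow> G (j - 1) i = G i j"
  shows "(\<Sum>j\<le>Suc N. \<Sum>i\<le>N. frag_cmul ((-1) ^ (i + j)) (G i j)) = 0"
proof -
  define t where "t p = frag_cmul ((-1) ^ (snd p + fst p)) (G (snd p) (fst p))" for p
  define A1 where "A1 = {p \<in> {..Suc N} \<times> {..N}. snd p < fst p}"
  define A2 where "A2 = {p \<in> {..Suc N} \<times> {..N}. fst p \<le> snd p}"
  have "(\<Sum>j\<le>Suc N. \<Sum>i\<le>N. frag_cmul ((-1) ^ (i + j)) (G i j)) = sum t ({..Suc N} \<times> {..N})"
    unfolding t_def by (simp add: sum.cartesian_product case_prod_beta)
  also have "{..Suc N} \<times> {..N} = A1 \<union> A2" unfolding A1_def A2_def by auto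
  also have "sum t (A1 \<union> A2) = sum t A1 + sum t A2"
    by (rule sum.union_disjoint) (auto simp: A1_def A2_def)
  also have "sum t A1 = sum (\<lambda>p. - t p) A2"
  proof (rule sum.reindex_bij_witness[where i = "\<lambda>p. (Suc (snd p), fst p)" and j = "\<lambda>p. (snd p, fst p - 1)"])
    fix a assume a: "a \<in> A1"
    then show "(Suc (snd (snd a, fst a - 1)), fst (snd a, fst a - 1)) = a"
      and "(snd a, fst a - 1) \<in> A2"
      by (auto simp: A1_def A2_def)
    have "snd a + fst a = Suc (fst a - 1 + snd a)" using a by (auto simp: A1_def)
    then have "(-1::int) ^ (snd a + fst a) = - ((-1) ^ (fst a - 1 + snd a))"
      by (simp only: power_Suc)
    then show "- t (snd a, fst a - 1) = t a"
      using a G by (auto simp: A1_def t_def)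
  next
    fix b assume "b \<in> A2"
    then show "(snd (Suc (snd b), fst b), fst (Suc (snd b), fst b) - 1) = b"
      and "(Suc (snd b), fst b) \<in> A1"
      by (auto simp: A1_def A2_def)
  qed
  also have "sum (\<lambda>p. - t p) A2 + sum t A2 = 0" by (simp add: sum_negf)
  finally show ?thesis .
qed

text \<open>Since deletions never increase the total distance, a face of a face has the same total
  distance as \<open>x\<close> exactly when both deletions do.\<close>
lemma nerve_boundary_face:
  assumes qm: "quasi_metric X d" and X: "set x \<subseteq> X"
  shows "nerve_boundary d (Suc m) (nerve_face d j x)
    = (\<Sum>i\<le>Suc m. frag_cmul ((-1) ^ i)
        (if tuple_length d (delete_at i (delete_at j x)) = tuple_length d x
         then frag_of (delete_at i (delete_at j x)) else 0))"
proof (cases "tuple_length d (delete_at j x) = tuple_length d x")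
  case True
  then show ?thesis by (simp add: nerve_face_def nerve_boundary_def)
next
  case False
  have "tuple_length d (delete_at i (delete_at j x)) \<le> tuple_length d (delete_at j x)" for i
    using tuple_length_delete_at_le[OF qm order.trans[OF set_delete_at X]] .
  then have "tuple_length d (delete_at i (delete_at j x)) \<noteq> tuple_length d x" for i
    using False tuple_length_delete_at_le[OF qm X, of j] by (smt (verit))
  then show ?thesis using False by (simp add: nerve_face_def nerve_boundary_zero)
qed

lemma nerve_boundary_boundary_frag_of:
  assumes qm: "quasi_metric X d" and X: "set x \<subseteq> X" and len: "length x = Suc (Suc (Suc m))"
  shows "nerve_boundary d (Suc m) (\<Sum>j\<le>Suc (Suc m). frag_cmul ((-1) ^ j) (nerve_face d j x)) = 0"
proof -
  define G where "G i j = (if tuple_length d (delete_at i (delete_at j x)) = tuple_length d x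
         then frag_of (delete_at i (delete_at j x)) else (0 :: 'a list \<Rightarrow>\<^sub>0 int))" for i j
  have "nerve_boundary d (Suc m) (\<Sum>j\<le>Suc (Suc m). frag_cmul ((-1) ^ j) (nerve_face d j x))
      = (\<Sum>j\<le>Suc (Suc m). frag_cmul ((-1) ^ j) (\<Sum>i\<le>Suc m. frag_cmul ((-1) ^ i) (G i j)))"
    by (simp only: nerve_boundary_sum nerve_boundary_cmul nerve_boundary_face[OF qm X] G_def)
  also have "\<dots> = (\<Sum>j\<le>Suc (Suc m). \<Sum>i\<le>Suc m. frag_cmul ((-1) ^ (i + j)) (G i j))"
    by (simp only: frag_cmul_sum frag_cmul_cmul)
      (intro sum.cong[OF refl], simp add: power_add mult.commute)
  also have "\<dots> = 0"
  proof (rule sum_simplicial_pairs_cancel)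
    fix i j assume "i < j" "j \<le> Suc (Suc m)"
    then show "G (j - 1) i = G i j" using delete_at_delete_at[of i j x] len by (simp add: G_def)
  qed
  finally show ?thesis .
qed

lemma nerve_boundary_boundary:
  assumes qm: "quasi_metric X d" and c: "Poly_Mapping.keys c \<subseteq> nerve_gens X d (Suc n) l"
  shows "nerve_boundary d n (nerve_boundary d (Suc n) c) = 0"
proof (cases n)
  case (Suc m)
  have "nerve_boundary d (Suc n) c = (\<Sum>x\<in>Poly_Mapping.keys c. frag_cmul (poly_mapping.lookup c x)
        (\<Sum>j\<le>Suc (Suc m). frag_cmul ((-1) ^ j) (nerve_face d j x)))"
    using Suc by (simp add: nerve_boundary_def frag_extend_def)
  then have "nerve_boundary d n (nerve_boundary d (Suc n) c)
      = (\<Sum>x\<in>Poly_Mapping.keys c. frag_cmul (poly_mapping.lookup c x)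
          (nerve_boundary d (Suc m) (\<Sum>j\<le>Suc (Suc m). frag_cmul ((-1) ^ j) (nerve_face d j x))))"
    using Suc by (simp add: nerve_boundary_sum nerve_boundary_cmul)
  also have "\<dots> = 0"
  proof (intro sum.neutral ballI)
    fix x assume "x \<in> Poly_Mapping.keys c"
    then have "set x \<subseteq> X" "length x = Suc (Suc (Suc m))"
      using c Suc by (auto simp: nerve_gens_def)
    then show "frag_cmul (poly_mapping.lookup c x)
        (nerve_boundary d (Suc m) (\<Sum>j\<le>Suc (Suc m). frag_cmul ((-1) ^ j) (nerve_face d j x))) = 0"
      using nerve_boundary_boundary_frag_of[OF qm] by simp
  qed
  finally show ?thesis .
qed (simp add: nerve_boundary_def)

section \<open>Ranks in the magnitude nerve\<close>

definition nerve_cycles :: "'a set \<Rightarrow> ('a \<Rightarrow> 'a \<Rightarrow> real) \<Rightarrow> nat \<Rightarrow> real \<Rightarrow> ('a list \<Rightarrow>\<^sub>0 int) set" where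
  "nerve_cycles X d n l = {c \<in> carrier (nerve_chains X d n l). nerve_boundary d n c = 0}"

definition nerve_boundaries :: "'a set \<Rightarrow> ('a \<Rightarrow> 'a \<Rightarrow> real) \<Rightarrow> nat \<Rightarrow> real \<Rightarrow> ('a list \<Rightarrow>\<^sub>0 int) set" where
  "nerve_boundaries X d n l = nerve_boundary d (Suc n) ` carrier (nerve_chains X d (Suc n) l)"

definition chain_dim :: "'a set \<Rightarrow> ('a \<Rightarrow> 'a \<Rightarrow> real) \<Rightarrow> nat \<Rightarrow> real \<Rightarrow> nat" where
  "chain_dim X d n l = Q.dim (frag_rat ` carrier (nerve_chains X d n l))"

definition cycle_dim :: "'a set \<Rightarrow> ('a \<Rightarrow> 'a \<Rightarrow> real) \<Rightarrow> nat \<Rightarrow> real \<Rightarrow> nat" where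
  "cycle_dim X d n l = Q.dim (frag_rat ` nerve_cycles X d n l)"

definition boundary_dim :: "'a set \<Rightarrow> ('a \<Rightarrow> 'a \<Rightarrow> real) \<Rightarrow> nat \<Rightarrow> real \<Rightarrow> nat" where
  "boundary_dim X d n l = Q.dim (frag_rat ` nerve_boundaries X d n l)"

lemma carrier_nerve_chains: "carrier (nerve_chains X d n l) = {c. Poly_Mapping.keys c \<subseteq> nerve_gens X d n l}"
  by (auto simp: nerve_chains_def)

lemma finite_nerve_gens: "finite X \<Longrightarrow> finite (nerve_gens X d n l)"
  by (rule finite_subset[OF _ finite_lists_length_eq[of X "Suc n"]]) (auto simp: nerve_gens_def)

lemma frag_linear_nerve_boundary: "frag_linear (nerve_boundary d n)"
  by (simp add: frag_linear_def nerve_boundary_add nerve_boundary_cmul)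

lemma frag_submodule_nerve_chains: "frag_submodule (carrier (nerve_chains X d n l))"
  unfolding frag_submodule_def carrier_nerve_chains
  by (auto dest: subsetD[OF keys_cmul] subsetD[OF keys_add])

lemma frag_submodule_nerve_cycles: "frag_submodule (nerve_cycles X d n l)"
  using frag_submodule_nerve_chains[of X d n l]
  by (auto simp: frag_submodule_def nerve_cycles_def nerve_boundary_add nerve_boundary_cmul nerve_boundary_zero)

lemma frag_submodule_nerve_boundaries: "frag_submodule (nerve_boundaries X d n l)"
  unfolding frag_submodule_def nerve_boundaries_def
proof (intro conjI ballI allI)
  have C: "frag_submodule (carrier (nerve_chains X d (Suc n) l))"
    by (rule frag_submodule_nerve_chains)
  then show "0 \<in> nerve_boundary d (Suc n) ` carrier (nerve_chains X d (Suc n) l)"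
    by (auto simp: frag_submodule_def
        intro!: image_eqI[where f = "nerve_boundary d (Suc n)", OF nerve_boundary_zero[symmetric]])
  fix a b assume "a \<in> nerve_boundary d (Suc n) ` carrier (nerve_chains X d (Suc n) l)"
    "b \<in> nerve_boundary d (Suc n) ` carrier (nerve_chains X d (Suc n) l)"
  with C show "a + b \<in> nerve_boundary d (Suc n) ` carrier (nerve_chains X d (Suc n) l)"
    by (auto simp: frag_submodule_def
        intro!: image_eqI[where f = "nerve_boundary d (Suc n)", OF nerve_boundary_add[symmetric]])
next
  fix a i assume "a \<in> nerve_boundary d (Suc n) ` carrier (nerve_chains X d (Suc n) l)"
  with frag_submodule_nerve_chains[of X d "Suc n" l]
  show "frag_cmul i a \<in> nerve_boundary d (Suc n) ` carrier (nerve_chains X d (Suc n) l)"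
    by (auto simp: frag_submodule_def
        intro!: image_eqI[where f = "nerve_boundary d (Suc n)", OF nerve_boundary_cmul[symmetric]])
qed

lemma nerve_cycles_subset: "nerve_cycles X d n l \<subseteq> carrier (nerve_chains X d n l)"
  by (auto simp: nerve_cycles_def)

lemma nerve_boundaries_subset_cycles:
  assumes "quasi_metric X d"
  shows "nerve_boundaries X d n l \<subseteq> nerve_cycles X d n l"
  using keys_nerve_boundary_subset[OF assms] nerve_boundary_boundary[OF assms]
  by (auto simp: nerve_boundaries_def nerve_cycles_def carrier_nerve_chains)

lemma ab_rank_nerve_chains:
  assumes "finite X"
  shows "ab_rank (nerve_chains X d n l) = chain_dim X d n l"
proof -
  have "ab_rank (nerve_chains X d n l) = frag_rank_mod (carrier (nerve_chains X d n l)) {0}"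
    using carrier_nerve_chains[of X d n l] by (simp add: nerve_chains_def ab_rank_free_Abelian_group)
  also have "\<dots> = chain_dim X d n l"
    unfolding chain_dim_def
    by (intro frag_rank_mod_zero_eq_dim[OF finite_nerve_gens[OF assms, of d n l]] frag_submodule_nerve_chains)
      (simp add: carrier_nerve_chains)
  finally show ?thesis .
qed

lemma ab_rank_magnitude_homology:
  assumes "finite X" "quasi_metric X d"
  shows "ab_rank (magnitude_homology X d n l) = cycle_dim X d n l - boundary_dim X d n l"
proof -
  let ?S = "nerve_gens X d n l"
  have sub: "subgroup B (free_Abelian_group ?S)" if "frag_submodule B" "B \<subseteq> nerve_cycles X d n l" for B
    using that nerve_cycles_subset[of X d n l]
    by (intro frag_submodule_imp_subgroup) (auto simp: carrier_nerve_chains)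
  have "magnitude_homology X d n l
      = subgroup_generated (free_Abelian_group ?S) (nerve_cycles X d n l) Mod nerve_boundaries X d n l"
    by (simp add: magnitude_homology_def nerve_cycles_def nerve_boundaries_def nerve_chains_def)
  also have "ab_rank \<dots> = frag_rank_mod (nerve_cycles X d n l) (nerve_boundaries X d n l)"
    using nerve_boundaries_subset_cycles[OF assms(2)]
    by (intro ab_rank_subgroup_generated_free_Mod sub frag_submodule_nerve_cycles
        frag_submodule_nerve_boundaries) auto
  also have "\<dots> = cycle_dim X d n l - boundary_dim X d n l"
    unfolding cycle_dim_def boundary_dim_def
    using nerve_cycles_subset[of X d n l] frag_submodule_nerve_boundaries
      nerve_boundaries_subset_cycles[OF assms(2)]
    by (intro frag_rank_mod_eq_dim_diff[OF finite_nerve_gens[OF assms(1)]]) (auto simp: carrier_nerve_chains)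
  finally show ?thesis .
qed

lemma cycle_dim_le_chain_dim:
  assumes "finite X"
  shows "cycle_dim X d n l \<le> chain_dim X d n l"
  unfolding cycle_dim_def chain_dim_def
  using nerve_cycles_subset[of X d n l]
  by (intro dim_frag_rat_mono[OF finite_nerve_gens[OF assms]]) (auto simp: carrier_nerve_chains)

lemma boundary_dim_le_cycle_dim:
  assumes "finite X" "quasi_metric X d"
  shows "boundary_dim X d n l \<le> cycle_dim X d n l"
  unfolding cycle_dim_def boundary_dim_def
  using nerve_cycles_subset[of X d n l] nerve_boundaries_subset_cycles[OF assms(2)]
  by (intro dim_frag_rat_mono[OF finite_nerve_gens[OF assms(1)]]) (auto simp: carrier_nerve_chains)

lemma chain_dim_0: "chain_dim X d 0 l = cycle_dim X d 0 l"
  by (simp add: chain_dim_def cycle_dim_def nerve_cycles_def nerve_boundary_def)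

lemma chain_dim_Suc:
  assumes fin: "finite X" and qm: "quasi_metric X d"
  shows "chain_dim X d (Suc n) l = cycle_dim X d (Suc n) l + boundary_dim X d n l"
proof -
  let ?C = "carrier (nerve_chains X d (Suc n) l)"
  have "frag_rank_mod ?C (nerve_cycles X d (Suc n) l) = frag_rank_mod (nerve_boundaries X d n l) {0}"
    unfolding nerve_cycles_def nerve_boundaries_def
    by (rule frag_rank_mod_kernel_eq_image[OF frag_linear_nerve_boundary frag_submodule_nerve_chains])
  moreover have "frag_rank_mod ?C (nerve_cycles X d (Suc n) l) = chain_dim X d (Suc n) l - cycle_dim X d (Suc n) l"
    unfolding chain_dim_def cycle_dim_def
    using nerve_cycles_subset[of X d "Suc n" l] frag_submodule_nerve_cycles
    by (intro frag_rank_mod_eq_dim_diff[OF finite_nerve_gens[OF fin]]) (auto simp: carrier_nerve_chains)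
  moreover have "frag_rank_mod (nerve_boundaries X d n l) {0} = boundary_dim X d n l"
    unfolding boundary_dim_def
    using nerve_boundaries_subset_cycles[OF qm, of n l] nerve_cycles_subset[of X d n l]
    by (intro frag_rank_mod_zero_eq_dim[OF finite_nerve_gens[OF fin]] frag_submodule_nerve_boundaries)
      (auto simp: carrier_nerve_chains)
  ultimately show ?thesis using cycle_dim_le_chain_dim[OF fin, of d "Suc n" l] by linarith
qed

lemma chain_dim_eq_0_if_nerve_gens_empty:
  assumes "nerve_gens X d n l = {}"
  shows "chain_dim X d n l = 0"
proof -
  have "carrier (nerve_chains X d n l) = {0}" using assms by (auto simp: carrier_nerve_chains)
  then show ?thesis by (simp add: chain_dim_def frag_rat_zero dim_singleton_zero)
qed

section \<open>Hahn series\<close>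

lemma quasi_metric_min_distance:
  assumes fin: "finite X" and qm: "quasi_metric X d"
  obtains \<delta> where "\<delta> > 0" "\<And>x y. x \<in> X \<Longrightarrow> y \<in> X \<Longrightarrow> x \<noteq> y \<Longrightarrow> \<delta> \<le> d x y"
proof
  let ?P = "insert 1 ((\<lambda>(x, y). d x y) ` {(x, y) \<in> X \<times> X. x \<noteq> y})"
  have "finite ?P"
    using fin by (auto intro!: finite_imageI intro: finite_subset[of _ "X \<times> X"])
  moreover have "0 < p" if "p \<in> ?P" for p
    using that quasi_metricD(4)[OF qm] by auto
  ultimately show "Min ?P > 0" by (simp del: insert_iff)
  show "Min ?P \<le> d x y" if "x \<in> X" "y \<in> X" "x \<noteq> y" for x y
    using \<open>finite ?P\<close> that by (intro Min_le) auto
qed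

lemma nerve_gens_grading_ge:
  assumes \<delta>: "\<And>x y. x \<in> X \<Longrightarrow> y \<in> X \<Longrightarrow> x \<noteq> y \<Longrightarrow> \<delta> \<le> d x y"
    and xs: "xs \<in> nerve_gens X d n l"
  shows "real n * \<delta> \<le> l"
proof -
  have len: "length xs = Suc n" and X: "set xs \<subseteq> X" and succ: "\<forall>i<n. xs ! i \<noteq> xs ! Suc i"
    and l: "tuple_length d xs = l" using xs by (auto simp: nerve_gens_def)
  have "real (card {..<n}) * \<delta> \<le> (\<Sum>i<n. d (xs ! i) (xs ! Suc i))"
    using X len succ by (intro sum_bounded_below \<delta>) (auto simp: subset_iff)
  then show ?thesis using l len by (simp add: tuple_length_def)
qed

lemma nerve_gens_eventually_empty:
  assumes "finite X" "quasi_metric X d"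
  obtains N where "\<And>n l. N \<le> n \<Longrightarrow> l < M \<Longrightarrow> nerve_gens X d n l = {}"
proof -
  obtain \<delta> where \<delta>: "\<delta> > 0" "\<And>x y. x \<in> X \<Longrightarrow> y \<in> X \<Longrightarrow> x \<noteq> y \<Longrightarrow> \<delta> \<le> d x y"
    using quasi_metric_min_distance[OF assms] by blast
  have "nerve_gens X d n l = {}" if "nat \<lceil>M / \<delta>\<rceil> \<le> n" "l < M" for n l
  proof -
    have "M / \<delta> \<le> real (nat \<lceil>M / \<delta>\<rceil>)" by (rule real_nat_ceiling_ge)
    also have "\<dots> \<le> real n" using that(1) by simp
    finally have "\<not> real n * \<delta> \<le> l" using \<delta>(1) that(2) by (simp add: pos_divide_le_eq)
    then show ?thesis using nerve_gens_grading_ge[OF \<delta>(2), where n = n and l = l] by auto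
  qed
  then show ?thesis using that by blast
qed

lemma finite_nerve_gradings_below:
  assumes fin: "finite X" and qm: "quasi_metric X d"
  shows "finite {l. l \<le> M \<and> (\<exists>n. nerve_gens X d n l \<noteq> {})}"
proof -
  obtain N where N: "\<And>n l. N \<le> n \<Longrightarrow> l < M + 1 \<Longrightarrow> nerve_gens X d n l = {}"
    using nerve_gens_eventually_empty[OF fin qm] by blast
  have "{l. l \<le> M \<and> (\<exists>n. nerve_gens X d n l \<noteq> {})}
      \<subseteq> tuple_length d ` {xs. set xs \<subseteq> X \<and> length xs \<le> N}"
  proof
    fix l assume "l \<in> {l. l \<le> M \<and> (\<exists>n. nerve_gens X d n l \<noteq> {})}"
    then obtain n xs where xs: "l \<le> M" "xs \<in> nerve_gens X d n l" by blast
    have "n < N"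
    proof (rule ccontr)
      assume "\<not> n < N"
      then have "nerve_gens X d n l = {}" using N xs(1) by simp
      then show False using xs(2) by simp
    qed
    with xs show "l \<in> tuple_length d ` {xs. set xs \<subseteq> X \<and> length xs \<le> N}"
      by (auto simp: nerve_gens_def)
  qed
  then show ?thesis by (rule finite_subset) (intro finite_imageI finite_lists_length_le fin)
qed

lemma is_hahn_if_finite_below:
  assumes "\<And>M. finite {l. l \<le> M \<and> f l \<noteq> 0}"
  shows "is_hahn f"
  unfolding is_hahn_def
proof (intro allI impI)
  fix S assume S: "S \<subseteq> {l. f l \<noteq> 0}" "S \<noteq> {}"
  then obtain s where s: "s \<in> S" by blast
  let ?S = "{a \<in> S. a \<le> s}"
  have fin: "finite ?S" using S(1) by (intro finite_subset[OF _ assms[of s]]) auto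
  have "Min ?S \<in> ?S" using fin s by (intro Min_in) auto
  moreover have "Min ?S \<le> a" if "a \<in> S" for a
    using Min_le[OF fin, of a] \<open>Min ?S \<in> ?S\<close> that by (cases "a \<le> s") auto
  ultimately show "\<exists>m\<in>S. \<forall>a\<in>S. m \<le> a" by blast
qed

lemma is_hahn_if_supported_on_nerve:
  assumes "finite X" "quasi_metric X d" "\<And>l. f l \<noteq> 0 \<Longrightarrow> \<exists>n. nerve_gens X d n l \<noteq> {}"
  shows "is_hahn f"
  using assms by (intro is_hahn_if_finite_below finite_subset[OF _ finite_nerve_gradings_below]) auto

lemma rank_HM_eq:
  assumes "finite X" "quasi_metric X d"
  shows "rank_HM X d n l = of_nat (cycle_dim X d n l) - of_nat (boundary_dim X d n l)"
  using ab_rank_magnitude_homology[OF assms] boundary_dim_le_cycle_dim[OF assms]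
  by (simp add: rank_HM_def of_nat_diff)

lemma partial_sum_rank_HM:
  assumes fin: "finite X" and qm: "quasi_metric X d"
  shows "(\<Sum>n<Suc N. (-1) ^ n * rank_HM X d n l)
    = (\<Sum>n<Suc N. (-1) ^ n * of_nat (chain_dim X d n l)) - (-1) ^ N * of_nat (boundary_dim X d N l)"
proof (induction N)
  case 0
  then show ?case by (simp add: rank_HM_eq[OF assms] chain_dim_0)
next
  case (Suc N)
  then show ?case
    by (simp add: rank_HM_eq[OF assms] chain_dim_Suc[OF assms] algebra_simps)
qed

lemma nerve_euler_char_eq_sum:
  assumes fin: "finite X" and N: "\<And>n. N \<le> n \<Longrightarrow> chain_dim X d n l = 0"
  shows "nerve_euler_char X d l = (\<Sum>n<N. (-1) ^ n * of_nat (chain_dim X d n l))"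
  unfolding nerve_euler_char_def ab_rank_nerve_chains[OF fin]
proof (rule sum.mono_neutral_left)
  show "{n. chain_dim X d n l \<noteq> 0} \<subseteq> {..<N}"
  proof
    fix n assume "n \<in> {n. chain_dim X d n l \<noteq> 0}"
    then show "n \<in> {..<N}" using N[of n] by (cases "N \<le> n") auto
  qed
qed auto

lemma is_hahn_nerve_euler_char:
  assumes "finite X" "quasi_metric X d"
  shows "is_hahn (nerve_euler_char X d)"
proof (rule is_hahn_if_supported_on_nerve[OF assms])
  fix l assume chi: "nerve_euler_char X d l \<noteq> 0"
  have "{n. chain_dim X d n l \<noteq> 0} \<noteq> {}"
  proof
    assume "{n. chain_dim X d n l \<noteq> 0} = {}"
    then have "nerve_euler_char X d l = 0"
      unfolding nerve_euler_char_def ab_rank_nerve_chains[OF assms(1)] by simp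
    with chi show False by simp
  qed
  then obtain n where "chain_dim X d n l \<noteq> 0" by blast
  then show "\<exists>n. nerve_gens X d n l \<noteq> {}" using chain_dim_eq_0_if_nerve_gens_empty[of X d n l] by auto
qed

lemma is_hahn_rank_HM:
  assumes "finite X" "quasi_metric X d"
  shows "is_hahn (rank_HM X d n)"
proof (rule is_hahn_if_supported_on_nerve[OF assms])
  fix l assume HM: "rank_HM X d n l \<noteq> 0"
  have "cycle_dim X d n l \<noteq> 0"
  proof
    assume "cycle_dim X d n l = 0"
    moreover from this have "boundary_dim X d n l = 0"
      using boundary_dim_le_cycle_dim[OF assms, of n l] by simp
    ultimately show False using HM by (simp add: rank_HM_eq[OF assms])
  qed
  then have "chain_dim X d n l \<noteq> 0"
    using cycle_dim_le_chain_dim[OF assms(1), of d n l] by linarith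
  then show "\<exists>n. nerve_gens X d n l \<noteq> {}" using chain_dim_eq_0_if_nerve_gens_empty[of X d n l] by auto
qed

lemma hahn_sums_rank_HM:
  assumes fin: "finite X" and qm: "quasi_metric X d"
  shows "hahn_sums (\<lambda>n l. (-1) ^ n * rank_HM X d n l) (nerve_euler_char X d)"
  unfolding hahn_sums_def
proof
  fix M :: real
  obtain N where N: "\<And>n l. N \<le> n \<Longrightarrow> l < M \<Longrightarrow> nerve_gens X d n l = {}"
    using nerve_gens_eventually_empty[OF fin qm] by blast
  show "\<exists>N0. \<forall>N'\<ge>N0. \<forall>l<M. (\<Sum>n<N'. (-1) ^ n * rank_HM X d n l) = nerve_euler_char X d l"
  proof (intro exI[of _ "Suc N"] allI impI)
    fix N' l assume "Suc N \<le> N'" "l < M"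
    then obtain K where K: "N' = Suc K" "N \<le> K" by (metis Suc_le_D Suc_le_mono)
    have chain0: "chain_dim X d n l = 0" if "N \<le> n" for n
      using N[OF that \<open>l < M\<close>] by (rule chain_dim_eq_0_if_nerve_gens_empty)
    then have "boundary_dim X d K l = 0"
      using chain_dim_Suc[OF fin qm, of K l] K(2) by simp
    then show "(\<Sum>n<N'. (-1) ^ n * rank_HM X d n l) = nerve_euler_char X d l"
      using partial_sum_rank_HM[OF fin qm, where N = K and l = l]
        nerve_euler_char_eq_sum[OF fin, where N = N' and l = l] chain0 K
      by simp
  qed
qed

theorem theorem5p9:
  fixes X :: "'a set" and d :: "'a \<Rightarrow> 'a \<Rightarrow> real"
  assumes "finite X" and "quasi_metric X d"
  shows "is_hahn (nerve_euler_char X d) \<and> (\<forall>n. is_hahn (rank_HM X d n)) \<and>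
         hahn_sums (\<lambda>n l. (-1) ^ n * rank_HM X d n l) (nerve_euler_char X d)"
  using is_hahn_nerve_euler_char[OF assms] is_hahn_rank_HM[OF assms] hahn_sums_rank_HM[OF assms]
  by blast

end
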